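(* Let $x\in\tilde W$ lie in the shrunken Weyl chambers, i.e. $k(a,x\mathbf a)\neq k(a,\mathbf a)$ for all $a\in\Sigma$. If $x\mathbf a$ is a $(J,w,\delta)$-alcove for some $J\subseteq\mathbb S$ with $\delta(J)=J$ and some $w\in W$, then $\eta_\delta(x)\in W_J$.
   Context: Let $\Bbbk$ be an algebraic closure of a finite field $\mathbb F_q$. Either $F$ is a finite extension of $\mathbb Q_p$ with residue field $\mathbb F_q$ and $L$ the completion of its maximal unramified extension, or $F=\mathbb F_q((\epsilon))$, $L=\Bbbk((\epsilon))$; $\sigma$ the Frobenius of $L/F$. $G$ is a quasi-split connected semisimple group over $F$ splitting over a tamely ramified extension of $L$; $S$ a maximal $L$-split torus defined over $F$, $T$ its centralizer, $\Gamma=\mathrm{Gal}(\bar L/L)$, $\tilde W=N_S(L)/T(L)_1=X_*(T)_\Gamma\rtimes W$ the Iwahori–Weyl group; $\delta$ the automorphism of $\tilde W,W$ induced by $\sigma$. Fix a $\sigma$-stable base alcove $\mathbf a$. $V=X_*(T)_\Gamma\otimes\mathbb R$; $\Sigma$ the reduced root system with affine roots $v\mapsto\langle a,v\rangle+k$, $a\in\Sigma$, $k\in\mathbb Z$; $H_{a,k}=\{v:\langle a,v\rangle=k\}$; $W=W(\Sigma)$. The base alcove lies in the anti-dominant chamber; $\mathbb S$ the corresponding simple roots/simple reflections; $\Sigma^+$ positive roots; for $J\subset\mathbb S$, $\Sigma_J$ the roots spanned by $J$, $\Sigma_J^+=\Sigma_J\cap\Sigma^+$, $W_J$ parabolic subgroup,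 $\tilde W_J=X_*(T)_\Gamma\rtimes W_J$. For an alcove $\mathbf b$ and $a\in\Sigma$, $k(a,\mathbf b)$ is the unique integer $k$ such that $\mathbf b$ lies between $H_{a,k}$ and $H_{a,k-1}$. $x\mathbf a$ is a $(J,w,\delta)$-alcove if (1) $w^{-1}x\delta(w)\in\tilde W_J$ and (2) $k(a,x\mathbf a)\ge k(a,\mathbf a)$ for all $a\in w(\Sigma^+\setminus\Sigma^+_J)$ (equivalently, in group-theoretic terms, $\mathbf U_a(L)\cap xIx^{-1}\subseteq \mathbf U_a(L)\cap I$ for the root subgroups $\mathbf U_a$ of positive relative roots $a$ outside $\Phi_J$, translated by $w$, with $I$ the Iwahori of $\mathbf a$). $\eta_1:\tilde W\to W$ the projection, $\eta_2(x)$ the unique $v\in W$ with $v^{-1}x\mathbf a$ in the dominant chamber, $\eta_\delta(x)=\delta^{-1}(\eta_2(x)^{-1}\eta_1(x))\eta_2(x)$. *)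

theory Defs
  imports "HOL-Analysis.Analysis"
begin

text \<open>
  V is a real Euclidean space (type 'v), equipped with an inner product
  invariant under W and under sigma. Roots are identified with vectors via this
  inner product, so the pairing of a root a with v is a \<bullet> v.
\<close>

definition root_refl :: "'v::euclidean_space \<Rightarrow> 'v \<Rightarrow> 'v" where
  "root_refl a v = v - (2 * (a \<bullet> v) / (a \<bullet> a)) *\<^sub>R a"

definition coroot :: "'v::euclidean_space \<Rightarrow> 'v" where
  "coroot a = (2 / (a \<bullet> a)) *\<^sub>R a"

text \<open>Reduced crystallographic root system (finite, spanning V: G semisimple).\<close>
definition reduced_root_system :: "'v::euclidean_space set \<Rightarrow> bool" where
  "reduced_root_system Phi \<longleftrightarrow>
     finite Phi \<and> 0 \<notin> Phi \<and> span Phi = UNIV \<and>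
     (\<forall>a\<in>Phi. \<forall>b\<in>Phi. root_refl a b \<in> Phi) \<and>
     (\<forall>a\<in>Phi. \<forall>b\<in>Phi. 2 * (a \<bullet> b) / (a \<bullet> a) \<in> \<int>) \<and>
     (\<forall>a\<in>Phi. \<forall>c::real. c *\<^sub>R a \<in> Phi \<longrightarrow> c = 1 \<or> c = -1)"

text \<open>Group generated by the reflections s_a, a in R (as maps V to V).
  W = gen_group Phi, W_J = gen_group J.\<close>
inductive_set gen_group :: "'v::euclidean_space set \<Rightarrow> ('v \<Rightarrow> 'v) set" for R where
  gen_id: "id \<in> gen_group R"
| gen_step: "a \<in> R \<Longrightarrow> u \<in> gen_group R \<Longrightarrow> root_refl a \<circ> u \<in> gen_group R"

text \<open>xi: a regular vector in the anti-dominant chamber; it determines the positive roots.\<close>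
definition pos_roots :: "'v::euclidean_space set \<Rightarrow> 'v \<Rightarrow> 'v set" where
  "pos_roots Phi xi = {a \<in> Phi. a \<bullet> xi < 0}"

definition simple_roots :: "'v::euclidean_space set \<Rightarrow> 'v \<Rightarrow> 'v set" where
  "simple_roots Phi xi = {a \<in> pos_roots Phi xi.
      \<not> (\<exists>b\<in>pos_roots Phi xi. \<exists>c\<in>pos_roots Phi xi. a = b + c)}"

definition sub_roots :: "'v::euclidean_space set \<Rightarrow> 'v set \<Rightarrow> 'v set" where
  "sub_roots Phi J = Phi \<inter> span J"

definition dominant_chamber :: "'v::euclidean_space set \<Rightarrow> 'v \<Rightarrow> 'v set" where
  "dominant_chamber Phi xi = {v. \<forall>a\<in>pos_roots Phi xi. a \<bullet> v > 0}"

definition base_alcove :: "'v::euclidean_space set \<Rightarrow> 'v \<Rightarrow> 'v set" where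
  "base_alcove Phi xi = {v. \<forall>a\<in>pos_roots Phi xi. -1 < a \<bullet> v \<and> a \<bullet> v < 0}"

definition kval :: "'v::euclidean_space \<Rightarrow> 'v set \<Rightarrow> int" where
  "kval a B = (THE k::int. \<forall>v\<in>B. of_int k - 1 < a \<bullet> v \<and> a \<bullet> v < of_int k)"

text \<open>Translation lattice X (image of X_*(T)_Gamma in V): a W-stable subgroup
  between the coroot lattice and the coweight lattice.\<close>
definition translation_lattice :: "'v::euclidean_space set \<Rightarrow> 'v set \<Rightarrow> bool" where
  "translation_lattice Phi X \<longleftrightarrow>
     0 \<in> X \<and> (\<forall>l\<in>X. \<forall>m\<in>X. l + m \<in> X \<and> l - m \<in> X) \<and>
     (\<forall>u\<in>gen_group Phi. \<forall>l\<in>X. u l \<in> X) \<and>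
     (\<forall>a\<in>Phi. coroot a \<in> X) \<and>
     (\<forall>l\<in>X. \<forall>a\<in>Phi. a \<bullet> l \<in> \<int>)"

text \<open>Iwahori-Weyl group X \<rtimes> W: the pair (l,u) acts by v \<mapsto> l + u v.\<close>
type_synonym 'v iw = "'v \<times> ('v \<Rightarrow> 'v)"

definition IW :: "'v::euclidean_space set \<Rightarrow> 'v set \<Rightarrow> 'v iw set" where
  "IW Phi X = {(l, u). l \<in> X \<and> u \<in> gen_group Phi}"

definition IW_J :: "'v::euclidean_space set \<Rightarrow> 'v set \<Rightarrow> 'v iw set" where
  "IW_J J X = {(l, u). l \<in> X \<and> u \<in> gen_group J}"

definition iw_act :: "'v::euclidean_space iw \<Rightarrow> 'v \<Rightarrow> 'v" where
  "iw_act x v = fst x + snd x v"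

definition iw_mult :: "'v::euclidean_space iw \<Rightarrow> 'v iw \<Rightarrow> 'v iw" where
  "iw_mult x y = (fst x + snd x (fst y), snd x \<circ> snd y)"

text \<open>delta, induced by the Frobenius sigma acting on V.\<close>
definition delta_W :: "('v \<Rightarrow> 'v) \<Rightarrow> ('v \<Rightarrow> 'v) \<Rightarrow> ('v \<Rightarrow> 'v)" where
  "delta_W sig u = sig \<circ> u \<circ> inv sig"

definition delta_W_inv :: "('v \<Rightarrow> 'v) \<Rightarrow> ('v \<Rightarrow> 'v) \<Rightarrow> ('v \<Rightarrow> 'v)" where
  "delta_W_inv sig u = inv sig \<circ> u \<circ> sig"

definition delta_IW :: "('v \<Rightarrow> 'v) \<Rightarrow> 'v iw \<Rightarrow> 'v iw" where
  "delta_IW sig x = (sig (fst x), delta_W sig (snd x))"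

definition eta1 :: "'v::euclidean_space iw \<Rightarrow> ('v \<Rightarrow> 'v)" where
  "eta1 x = snd x"

definition eta2 :: "'v::euclidean_space set \<Rightarrow> 'v \<Rightarrow> 'v iw \<Rightarrow> ('v \<Rightarrow> 'v)" where
  "eta2 Phi xi x = (THE v. v \<in> gen_group Phi \<and>
      inv v ` (iw_act x ` base_alcove Phi xi) \<subseteq> dominant_chamber Phi xi)"

definition eta_delta :: "'v::euclidean_space set \<Rightarrow> 'v \<Rightarrow> ('v \<Rightarrow> 'v) \<Rightarrow> 'v iw \<Rightarrow> ('v \<Rightarrow> 'v)" where
  "eta_delta Phi xi sig x =
     delta_W_inv sig (inv (eta2 Phi xi x) \<circ> eta1 x) \<circ> eta2 Phi xi x"

definition JW_alcove :: "'v::euclidean_space set \<Rightarrow> 'v \<Rightarrow> 'v set \<Rightarrow> ('v \<Rightarrow> 'v)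
    \<Rightarrow> 'v set \<Rightarrow> ('v \<Rightarrow> 'v) \<Rightarrow> 'v iw \<Rightarrow> bool" where
  "JW_alcove Phi xi X sig J w x \<longleftrightarrow>
     iw_mult (iw_mult (0, inv w) x) (delta_IW sig (0, w)) \<in> IW_J J X \<and>
     (\<forall>a \<in> w ` (pos_roots Phi xi - (sub_roots Phi J \<inter> pos_roots Phi xi)).
        kval a (iw_act x ` base_alcove Phi xi) \<ge> kval a (base_alcove Phi xi))"

end

theory Submission
  imports Defs
begin

(* An alcove x.a that meets no root hyperplane through the origin lies in a single
   Weyl chamber v.C (C the dominant chamber), and eta2(x) = v.  Let b be a positive root outside
   Phi_J.  The (J,w,delta) condition gives k(wb, x.a) >= k(wb, a) >= 0, the shrunken condition
   makes this strict, so wb is positive on x.a and v^-1 wb is positive on C.  Hence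
   y = v^-1 w maps the positive roots outside Phi_J to positive roots, which forces y into W_J.
   With j = w^-1 eta1(x) delta(w), also in W_J by the (J,w,delta) condition, one computes
   eta_delta(x) = delta^-1(y) delta^-1(j) y^-1. *)

section \<open>Reflections and reflection groups\<close>

lemma linear_root_refl: "linear (root_refl a)"
  unfolding root_refl_def
  by (intro linear_compose_sub linear_ident)
     (auto intro!: linearI simp: inner_add_right inner_scaleR_right scaleR_add_left
        add_divide_distrib algebra_simps)

lemma inner_root_refl: "(a::'v::euclidean_space) \<noteq> 0 \<Longrightarrow> root_refl a v \<bullet> root_refl a w = v \<bullet> w"
  unfolding root_refl_def
  by (simp add: inner_diff_left inner_diff_right inner_commute field_simps)

lemma orthogonal_transformation_root_refl:
  "(a::'v::euclidean_space) \<noteq> 0 \<Longrightarrow> orthogonal_transformation (root_refl a)"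
  by (simp add: orthogonal_transformation_def linear_root_refl inner_root_refl)

lemma root_refl_root_refl: "(a::'v::euclidean_space) \<noteq> 0 \<Longrightarrow> root_refl a (root_refl a v) = v"
  unfolding root_refl_def
  by (simp add: inner_diff_right algebra_simps field_simps)

lemma root_refl_self: "(a::'v::euclidean_space) \<noteq> 0 \<Longrightarrow> root_refl a a = - a"
  unfolding root_refl_def by (simp add: algebra_simps scaleR_2)

lemma root_refl_uminus: "root_refl (- a) = root_refl (a::'v::euclidean_space)"
  unfolding root_refl_def by (auto simp: fun_eq_iff)

lemma orthogonal_transformation_root_refl_conj:
  "orthogonal_transformation g \<Longrightarrow> g (root_refl a v) = root_refl (g a) (g v)"
  unfolding root_refl_def orthogonal_transformation_def
  by (simp add: linear_diff linear_cmul)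

lemma root_refl_root_refl_conj:
  assumes "(a::'v::euclidean_space) \<noteq> 0"
  shows "root_refl (root_refl a b) = root_refl a \<circ> root_refl b \<circ> root_refl a"
proof
  fix v
  have "root_refl a (root_refl b (root_refl a v)) =
      root_refl (root_refl a b) (root_refl a (root_refl a v))"
    using orthogonal_transformation_root_refl[OF assms]
    by (rule orthogonal_transformation_root_refl_conj)
  then show "root_refl (root_refl a b) v = (root_refl a \<circ> root_refl b \<circ> root_refl a) v"
    by (simp add: root_refl_root_refl[OF assms])
qed

lemma root_refl_adjoint: "(a::'v::euclidean_space) \<noteq> 0 \<Longrightarrow> root_refl a v \<bullet> w = v \<bullet> root_refl a w"
  by (metis inner_root_refl root_refl_root_refl)

lemma gen_group_comp: "u \<in> gen_group R \<Longrightarrow> v \<in> gen_group R \<Longrightarrow> u \<circ> v \<in> gen_group R"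
  by (induction rule: gen_group.induct) (auto simp: comp_assoc intro: gen_group.intros)

lemma root_refl_in_gen_group: "a \<in> R \<Longrightarrow> root_refl a \<in> gen_group R"
  using gen_group.gen_step[OF _ gen_group.gen_id] by fastforce

lemma orthogonal_transformation_gen_group:
  "u \<in> gen_group R \<Longrightarrow> 0 \<notin> R \<Longrightarrow> orthogonal_transformation u"
  by (induction rule: gen_group.induct)
     (auto simp: id_def
        intro!: orthogonal_transformation_compose orthogonal_transformation_root_refl)

lemma bij_gen_group: "u \<in> gen_group (R::'v::euclidean_space set) \<Longrightarrow> 0 \<notin> R \<Longrightarrow> bij u"
  using orthogonal_transformation_gen_group orthogonal_transformation_bij by blast

lemma inv_in_gen_group:
  assumes "u \<in> gen_group R" "0 \<notin> R"
  shows "inv u \<in> gen_group R"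
  using assms
proof (induction rule: gen_group.induct)
  case gen_id
  then show ?case by (simp only: inv_id) (rule gen_group.gen_id)
next
  case (gen_step a u)
  have a0: "a \<noteq> 0" using gen_step by auto
  have "bij (root_refl a)"
    using orthogonal_transformation_root_refl[OF a0] orthogonal_transformation_bij by blast
  moreover have "bij u" using gen_step bij_gen_group by blast
  moreover have "inv (root_refl a) = root_refl a"
    by (rule inv_unique_comp) (simp_all add: fun_eq_iff a0 root_refl_root_refl)
  ultimately have "inv (root_refl a \<circ> u) = inv u \<circ> root_refl a"
    by (metis o_inv_distrib)
  then show ?case
    using gen_step by (metis gen_group_comp root_refl_in_gen_group)
qed

lemma gen_group_conj:
  assumes "u \<in> gen_group J" "orthogonal_transformation g" "g ` J = J"
  shows "g \<circ> u \<circ> inv g \<in> gen_group J"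
proof -
  have bij: "bij g" using assms(2) orthogonal_transformation_bij by blast
  show ?thesis
    using assms(1)
  proof (induction rule: gen_group.induct)
    case gen_id
    have "g \<circ> id \<circ> inv g = id" using bij by (simp add: fun_eq_iff bij_is_surj surj_f_inv_f)
    then show ?case by (metis gen_group.gen_id)
  next
    case (gen_step a u)
    have "g \<circ> (root_refl a \<circ> u) \<circ> inv g = root_refl (g a) \<circ> (g \<circ> u \<circ> inv g)"
      using orthogonal_transformation_root_refl_conj[OF assms(2)] bij
      by (auto simp: fun_eq_iff bij_inv_eq_iff)
    moreover have "g a \<in> J" using gen_step assms(3) by blast
    ultimately show ?case using gen_step by (metis gen_group.gen_step)
  qed
qed

lemma gen_group_delta_W_inv:
  assumes "g \<in> gen_group J" "orthogonal_transformation sig" "sig ` J = J"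
  shows "delta_W_inv sig g \<in> gen_group J"
proof -
  have bsig: "bij sig" using assms(2) orthogonal_transformation_bij by blast
  have "inv sig \<circ> g \<circ> inv (inv sig) \<in> gen_group J"
  proof (rule gen_group_conj[OF assms(1)])
    show "orthogonal_transformation (inv sig)" using orthogonal_transformation_inv[OF assms(2)] .
    show "inv sig ` J = J" using assms(3) bsig by (metis bij_is_inj image_inv_f_f)
  qed
  then show ?thesis using bsig by (simp add: inv_inv_eq delta_W_inv_def)
qed

section \<open>Positive and simple roots\<close>

locale based_root_system =
  fixes Phi :: "'v::euclidean_space set" and xi :: 'v
  assumes root_system: "reduced_root_system Phi" and regular: "\<forall>a\<in>Phi. a \<bullet> xi \<noteq> 0"
begin

abbreviation "P \<equiv> pos_roots Phi xi"
abbreviation "S \<equiv> simple_roots Phi xi"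
abbreviation "W \<equiv> gen_group Phi"
abbreviation "C \<equiv> dominant_chamber Phi xi"

lemma finite_roots: "finite Phi" and zero_notin_roots: "0 \<notin> Phi"
  and root_refl_closed: "a \<in> Phi \<Longrightarrow> b \<in> Phi \<Longrightarrow> root_refl a b \<in> Phi"
  and cartan_integer: "a \<in> Phi \<Longrightarrow> b \<in> Phi \<Longrightarrow> 2 * (a \<bullet> b) / (a \<bullet> a) \<in> \<int>"
  and reduced: "a \<in> Phi \<Longrightarrow> c *\<^sub>R a \<in> Phi \<Longrightarrow> c = 1 \<or> c = -1"
  using root_system unfolding reduced_root_system_def by auto

lemma root_nonzero: "a \<in> Phi \<Longrightarrow> a \<noteq> 0"
  using zero_notin_roots by auto

lemma uminus_root: "a \<in> Phi \<Longrightarrow> - a \<in> Phi"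
  using root_refl_closed[of a a] root_refl_self root_nonzero by force

lemma pos_iff: "a \<in> P \<longleftrightarrow> a \<in> Phi \<and> a \<bullet> xi < 0"
  by (simp add: pos_roots_def)

lemma pos_roots_subset: "P \<subseteq> Phi"
  by (auto simp: pos_roots_def)

lemma simple_pos: "S \<subseteq> P"
  by (auto simp: simple_roots_def)

lemma simple_root: "\<alpha> \<in> S \<Longrightarrow> \<alpha> \<in> Phi" and simple_nonzero: "\<alpha> \<in> S \<Longrightarrow> \<alpha> \<noteq> 0"
  using simple_pos pos_roots_subset root_nonzero by auto

lemma finite_pos: "finite P"
  using finite_roots pos_roots_subset finite_subset by blast

lemma finite_simple: "finite S"
  using finite_pos simple_pos finite_subset by blast

lemma uminus_pos_root: "a \<in> Phi \<Longrightarrow> a \<notin> P \<Longrightarrow> - a \<in> P"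
  using regular uminus_root by (force simp: pos_iff)

lemma uminus_not_pos: "a \<in> P \<Longrightarrow> - a \<notin> P"
  by (simp add: pos_iff)

lemma simple_not_sum: "a \<in> S \<Longrightarrow> b \<in> P \<Longrightarrow> c \<in> P \<Longrightarrow> a \<noteq> b + c"
  by (auto simp: simple_roots_def)

lemma dominant_chamber_iff: "q \<in> C \<longleftrightarrow> (\<forall>a\<in>P. a \<bullet> q > 0)"
  by (simp add: dominant_chamber_def)

lemma W_root: "u \<in> W \<Longrightarrow> a \<in> Phi \<Longrightarrow> u a \<in> Phi"
  by (induction arbitrary: a rule: gen_group.induct) (auto simp: root_refl_closed)

lemma orthogonal_transformation_gen_group_roots:
  "u \<in> gen_group R \<Longrightarrow> R \<subseteq> Phi \<Longrightarrow> orthogonal_transformation u"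
  using orthogonal_transformation_gen_group zero_notin_roots by blast

lemma linear_W: "y \<in> W \<Longrightarrow> linear y"
  using orthogonal_transformation_gen_group_roots orthogonal_transformation_linear by blast

lemma roots_inner_sq_less:
  assumes a: "a \<in> Phi" and b: "b \<in> Phi" and "b \<noteq> a" "b \<noteq> - a"
  shows "(a \<bullet> b)\<^sup>2 < (a \<bullet> a) * (b \<bullet> b)"
proof -
  have "\<bar>a \<bullet> b\<bar> \<noteq> norm a * norm b"
  proof
    assume "\<bar>a \<bullet> b\<bar> = norm a * norm b"
    then have "norm a *\<^sub>R b = norm b *\<^sub>R a \<or> norm a *\<^sub>R b = - norm b *\<^sub>R a"
      using norm_cauchy_schwarz_abs_eq by blast
    moreover have "b = (1 / norm a) *\<^sub>R (norm a *\<^sub>R b)" using root_nonzero[OF a] by simp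
    ultimately obtain c where c: "b = c *\<^sub>R a"
      by (metis scaleR_scaleR)
    then have "c = 1 \<or> c = -1" using reduced[OF a] b by simp
    then show False using c assms(3,4) by auto
  qed
  then have "\<bar>a \<bullet> b\<bar> < norm a * norm b"
    using Cauchy_Schwarz_ineq2[of a b] by linarith
  then have "(a \<bullet> b)\<^sup>2 < (norm a * norm b)\<^sup>2"
    using power_strict_mono[of "\<bar>a \<bullet> b\<bar>" _ 2] by simp
  then show ?thesis by (simp add: power_mult_distrib power2_norm_eq_inner)
qed

text \<open>The two Cartan integers of a and b are positive with product less than 4, so one of them
  is 1, and then the corresponding reflection sends one root to plus or minus a - b.\<close>

lemma root_diff_of_inner_pos:
  assumes a: "a \<in> Phi" and b: "b \<in> Phi" and "b \<noteq> a" and pos: "0 < a \<bullet> b"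
  shows "a - b \<in> Phi"
proof -
  have aa: "a \<bullet> a > 0" and bb: "b \<bullet> b > 0" using root_nonzero a b by auto
  have "b \<noteq> - a"
  proof
    assume "b = - a"
    then have "a \<bullet> b = - (a \<bullet> a)" by simp
    then show False using pos inner_ge_zero[of a] by linarith
  qed
  obtain k1 :: int where k1: "2 * (a \<bullet> b) / (a \<bullet> a) = of_int k1"
    using cartan_integer[OF a b] by (metis Ints_cases)
  obtain k2 :: int where k2: "2 * (b \<bullet> a) / (b \<bullet> b) = of_int k2"
    using cartan_integer[OF b a] by (metis Ints_cases)
  have "0 < k1" "0 < k2"
    using k1 k2 pos aa bb
    by (metis divide_pos_pos inner_commute mult_pos_pos of_int_0_less_iff zero_less_numeral)+
  have "of_int (k1 * k2) = 4 * (a \<bullet> b)\<^sup>2 / ((a \<bullet> a) * (b \<bullet> b))"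
    using aa bb by (simp add: inner_commute power2_eq_square field_simps flip: k1 k2)
  also have "\<dots> < 4"
    using roots_inner_sq_less[OF a b \<open>b \<noteq> a\<close> \<open>b \<noteq> - a\<close>] aa bb by (simp add: field_simps)
  finally have "k1 * k2 < 4" by linarith
  then have "k1 = 1 \<or> k2 = 1"
    using \<open>0 < k1\<close> \<open>0 < k2\<close> mult_mono[of 2 k1 2 k2] by linarith
  then show ?thesis
  proof
    assume "k1 = 1"
    then have "root_refl a b = - (a - b)" using k1 pos by (simp add: root_refl_def)
    then show ?thesis using uminus_root[OF root_refl_closed[OF a b]] by simp
  next
    assume "k2 = 1"
    then have "root_refl b a = a - b" using k2 pos by (simp add: root_refl_def inner_commute)
    then show ?thesis using root_refl_closed[OF b a] by simp
  qed
qed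

lemma simple_roots_obtuse:
  assumes a: "\<alpha> \<in> S" and b: "\<beta> \<in> S" and "\<alpha> \<noteq> \<beta>"
  shows "\<alpha> \<bullet> \<beta> \<le> 0"
proof (rule ccontr)
  assume "\<not> \<alpha> \<bullet> \<beta> \<le> 0"
  then have d: "\<alpha> - \<beta> \<in> Phi"
    using root_diff_of_inner_pos simple_root a b assms(3) by auto
  show False
  proof (cases "\<alpha> - \<beta> \<in> P")
    case True
    then show False using simple_not_sum[OF a _ True] simple_pos b by auto
  next
    case False
    then have "\<beta> - \<alpha> \<in> P" using uminus_pos_root[OF d] by simp
    then show False using simple_not_sum[OF b _ \<open>\<beta> - \<alpha> \<in> P\<close>] simple_pos a by auto
  qed
qed

definition root_height :: "'v \<Rightarrow> real" where
  "root_height a = - (a \<bullet> xi)"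

lemma root_height_pos: "a \<in> P \<Longrightarrow> root_height a > 0"
  by (simp add: root_height_def pos_iff)

lemma pos_root_height_induct [consumes 1, case_names less]:
  assumes "a \<in> P"
    and "\<And>a. a \<in> P \<Longrightarrow> (\<And>b. b \<in> P \<Longrightarrow> root_height b < root_height a \<Longrightarrow> Q b) \<Longrightarrow> Q a"
  shows "Q a"
  using assms(1)
proof (induction "card {b\<in>P. root_height b < root_height a}" arbitrary: a rule: less_induct)
  case less
  show ?case
  proof (rule assms(2)[OF less.prems])
    fix b assume b: "b \<in> P" "root_height b < root_height a"
    then have "{c\<in>P. root_height c < root_height b} \<subset> {c\<in>P. root_height c < root_height a}"
      by auto
    then show "Q b" using less.hyps b(1) by (simp add: finite_pos psubset_card_mono)
  qed
qed

lemma pos_root_nonneg_comb: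
  "a \<in> P \<Longrightarrow> \<exists>c. (\<forall>s\<in>S. c s \<ge> 0) \<and> a = (\<Sum>s\<in>S. c s *\<^sub>R s)"
proof (induction a rule: pos_root_height_induct)
  case (less a)
  show ?case
  proof (cases "a \<in> S")
    case True
    show ?thesis
      by (rule exI[of _ "\<lambda>s. if s = a then 1 else 0"])
         (auto simp: True finite_simple if_distrib[of "\<lambda>c. c *\<^sub>R _"] sum.delta cong: if_cong)
  next
    case False
    then obtain b c where bc: "b \<in> P" "c \<in> P" "a = b + c"
      using less.hyps by (auto simp: simple_roots_def)
    have hb: "root_height b < root_height a" and hc: "root_height c < root_height a"
      using bc root_height_pos[of b] root_height_pos[of c]
      by (auto simp: root_height_def inner_add_left)
    obtain cb where "\<forall>s\<in>S. cb s \<ge> 0" "b = (\<Sum>s\<in>S. cb s *\<^sub>R s)"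
      using less.IH[OF bc(1) hb] by blast
    moreover obtain cc where "\<forall>s\<in>S. cc s \<ge> 0" "c = (\<Sum>s\<in>S. cc s *\<^sub>R s)"
      using less.IH[OF bc(2) hc] by blast
    ultimately show ?thesis
      by (intro exI[of _ "\<lambda>s. cb s + cc s"]) (simp add: bc scaleR_add_left sum.distrib)
  qed
qed

lemma nonneg_simple_comb_eq_0:
  assumes "\<forall>s\<in>S. c s \<ge> 0" "(\<Sum>s\<in>S. c s *\<^sub>R s) = 0" "s \<in> S"
  shows "c s = 0"
proof -
  have "(\<Sum>t\<in>S. c t * root_height t) = - ((\<Sum>t\<in>S. c t *\<^sub>R t) \<bullet> xi)"
    by (simp add: root_height_def inner_sum_left sum_negf)
  then have "(\<Sum>t\<in>S. c t * root_height t) = 0" using assms(2) by simp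
  moreover have "\<forall>t\<in>S. 0 \<le> c t * root_height t"
  proof
    fix t assume "t \<in> S"
    then show "0 \<le> c t * root_height t"
      using assms(1) root_height_pos[of t] simple_pos by (simp add: subset_iff)
  qed
  ultimately have "c s * root_height s = 0"
    using assms(3) by (simp add: sum_nonneg_eq_0_iff[OF finite_simple])
  moreover have "root_height s > 0" using root_height_pos simple_pos assms(3) by blast
  ultimately show ?thesis by simp
qed

text \<open>Split the coefficients into positive and negative parts; both parts give the same vector,
  whose square is a sum of nonpositive terms because distinct simple roots are obtuse.\<close>

lemma simple_roots_independent: "independent S"
proof -
  have "u s = 0" if z: "(\<Sum>s\<in>S. u s *\<^sub>R s) = 0" and s: "s \<in> S" for u :: "'v \<Rightarrow> real" and s
  proof -
    define p n where "p t = max (u t) 0" and "n t = max (- u t) 0" for t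
    have u: "u t = p t - n t" for t by (simp add: p_def n_def)
    define v where "v = (\<Sum>t\<in>S. p t *\<^sub>R t)"
    have vn: "v = (\<Sum>t\<in>S. n t *\<^sub>R t)"
      using z by (simp add: v_def u scaleR_diff_left sum_subtractf)
    have "v \<bullet> v = (\<Sum>t\<in>S. \<Sum>s\<in>S. n t * (p s * (s \<bullet> t)))"
      by (subst (1) v_def, subst vn)
         (simp add: inner_sum_left inner_sum_right sum_distrib_left mult.assoc)
    also have "\<dots> \<le> 0"
    proof (intro sum_nonpos)
      fix s t assume "s \<in> S" "t \<in> S"
      have "0 \<le> p s" "0 \<le> n t" by (simp_all add: p_def n_def)
      show "n t * (p s * (s \<bullet> t)) \<le> 0"
      proof (cases "s = t")
        case True
        then have "p s = 0 \<or> n t = 0" by (auto simp: p_def n_def max_def)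
        then show ?thesis by auto
      next
        case False
        then show ?thesis
          using simple_roots_obtuse[OF \<open>s \<in> S\<close> \<open>t \<in> S\<close>] \<open>0 \<le> p s\<close> \<open>0 \<le> n t\<close>
          by (simp add: mult_nonneg_nonpos)
      qed
    qed
    finally have "v = 0" by (metis inner_ge_zero inner_eq_zero_iff order_antisym)
    have "\<forall>t\<in>S. 0 \<le> p t" "\<forall>t\<in>S. 0 \<le> n t" by (simp_all add: p_def n_def)
    then have "p s = 0" "n s = 0"
      using nonneg_simple_comb_eq_0 s \<open>v = 0\<close> v_def vn by metis+
    then show ?thesis by (simp add: u)
  qed
  then show ?thesis unfolding dependent_finite[OF finite_simple] by blast
qed

lemma simple_comb_eq_0:
  assumes "(\<Sum>s\<in>S. u s *\<^sub>R s) = 0" "s \<in> S"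
  shows "u s = 0"
  using simple_roots_independent assms by (auto simp: dependent_finite[OF finite_simple])

lemma simple_in_span:
  assumes "J \<subseteq> S" "\<alpha> \<in> S" "\<alpha> \<in> span J"
  shows "\<alpha> \<in> J"
proof (rule ccontr)
  assume "\<alpha> \<notin> J"
  then have "\<alpha> \<in> span (S - {\<alpha>})" using assms span_mono[of J "S - {\<alpha>}"] by blast
  then show False using simple_roots_independent assms(2) dependent_def by blast
qed

text \<open>A positive root a other than alpha has a positive coefficient at some simple root
  beta other than alpha, and s_alpha does not change that coefficient.\<close>

lemma root_refl_simple_pos:
  assumes al: "\<alpha> \<in> S" and a: "a \<in> P" and ne: "a \<noteq> \<alpha>"
  shows "root_refl \<alpha> a \<in> P"
proof (rule ccontr)
  assume nP: "root_refl \<alpha> a \<notin> P"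
  have alP: "\<alpha> \<in> Phi" and aPhi: "a \<in> Phi" using al a simple_root pos_roots_subset by auto
  obtain c where c: "\<forall>s\<in>S. c s \<ge> 0" "a = (\<Sum>s\<in>S. c s *\<^sub>R s)"
    using pos_root_nonneg_comb[OF a] by blast
  have "\<exists>\<beta>\<in>S. \<beta> \<noteq> \<alpha> \<and> c \<beta> > 0"
  proof (rule ccontr)
    assume "\<not> ?thesis"
    then have z: "\<forall>\<beta>\<in>S. \<beta> \<noteq> \<alpha> \<longrightarrow> c \<beta> = 0" using c(1) by force
    have "a = (\<Sum>s\<in>S. if s = \<alpha> then c \<alpha> *\<^sub>R \<alpha> else 0)"
      unfolding c(2) by (rule sum.cong) (auto simp: z)
    also have "\<dots> = c \<alpha> *\<^sub>R \<alpha>" using al finite_simple by simp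
    finally have ac: "a = c \<alpha> *\<^sub>R \<alpha>" .
    then have "c \<alpha> = 1 \<or> c \<alpha> = -1" using reduced[OF alP] aPhi by simp
    moreover have "c \<alpha> \<ge> 0" using c(1) al by auto
    ultimately show False using ac ne by auto
  qed
  then obtain \<beta> where b: "\<beta> \<in> S" "\<beta> \<noteq> \<alpha>" "c \<beta> > 0" by blast
  have "- root_refl \<alpha> a \<in> P" using uminus_pos_root root_refl_closed[OF alP aPhi] nP by blast
  then obtain d where d: "\<forall>s\<in>S. d s \<ge> 0" "- root_refl \<alpha> a = (\<Sum>s\<in>S. d s *\<^sub>R s)"
    using pos_root_nonneg_comb by blast
  define k where "k = 2 * (\<alpha> \<bullet> a) / (\<alpha> \<bullet> \<alpha>)"
  have r: "root_refl \<alpha> a = a - k *\<^sub>R \<alpha>" by (simp add: root_refl_def k_def)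
  have "(\<Sum>s\<in>S. (c s + d s - (if s = \<alpha> then k else 0)) *\<^sub>R s)
      = (\<Sum>s\<in>S. c s *\<^sub>R s) + (\<Sum>s\<in>S. d s *\<^sub>R s) - (\<Sum>s\<in>S. (if s = \<alpha> then k *\<^sub>R s else 0))"
    by (simp add: scaleR_add_left scaleR_diff_left sum.distrib sum_subtractf
        if_distrib[of "\<lambda>x. x *\<^sub>R _"] cong: if_cong)
  also have "\<dots> = 0" using al finite_simple by (simp add: c(2)[symmetric] d(2)[symmetric] r)
  finally have "c \<beta> + d \<beta> - (if \<beta> = \<alpha> then k else 0) = 0"
    by (rule simple_comb_eq_0[OF _ b(1)])
  then show False using b d(1) by auto
qed

lemma root_refl_simple_neq: "\<alpha> \<in> S \<Longrightarrow> a \<in> P \<Longrightarrow> root_refl \<alpha> a \<noteq> \<alpha>"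
  by (metis simple_nonzero simple_pos uminus_not_pos root_refl_root_refl root_refl_self subsetD)

lemma pos_root_exists_simple_inner_pos:
  assumes "a \<in> P"
  obtains \<alpha> where "\<alpha> \<in> S" "0 < \<alpha> \<bullet> a"
proof -
  obtain c where c: "\<forall>s\<in>S. c s \<ge> 0" "a = (\<Sum>s\<in>S. c s *\<^sub>R s)"
    using pos_root_nonneg_comb[OF assms] by blast
  have "0 < a \<bullet> a" using root_nonzero assms pos_roots_subset by auto
  also have "a \<bullet> a = (\<Sum>s\<in>S. c s * (s \<bullet> a))"
    by (subst (1) c(2)) (simp add: inner_sum_left)
  finally have "\<exists>\<alpha>\<in>S. 0 < c \<alpha> * (\<alpha> \<bullet> a)"
    using sum_nonpos[of S "\<lambda>s. c s * (s \<bullet> a)"] by (meson not_less)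
  then show ?thesis using that c(1) by (auto simp: zero_less_mult_iff)
qed

text \<open>Induction on the height: reflecting a non-simple positive root b in a simple root that
  pairs positively with it gives a positive root of smaller height, whose reflection is
  conjugate to that of b.\<close>

lemma root_refl_in_simple_group: "b \<in> Phi \<Longrightarrow> root_refl b \<in> gen_group S"
proof -
  have pos: "root_refl b \<in> gen_group S" if "b \<in> P" for b
    using that
  proof (induction b rule: pos_root_height_induct)
    case (less b)
    show ?case
    proof (cases "b \<in> S")
      case True then show ?thesis by (rule root_refl_in_gen_group)
    next
      case False
      obtain \<alpha> where al: "\<alpha> \<in> S" "0 < \<alpha> \<bullet> b"
        using pos_root_exists_simple_inner_pos[OF less.hyps] by blast
      have a0: "\<alpha> \<noteq> 0" using simple_nonzero al by auto
      define b' where "b' = root_refl \<alpha> b"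
      have b'P: "b' \<in> P" unfolding b'_def
        using root_refl_simple_pos[OF al(1) less.hyps] False al(1) by auto
      have "root_height b' = root_height b - (2 * (\<alpha> \<bullet> b) / (\<alpha> \<bullet> \<alpha>)) * root_height \<alpha>"
        by (simp add: b'_def root_refl_def root_height_def inner_diff_left algebra_simps)
      moreover have "(2 * (\<alpha> \<bullet> b) / (\<alpha> \<bullet> \<alpha>)) * root_height \<alpha> > 0"
        using al a0 root_height_pos simple_pos by auto
      ultimately have "root_height b' < root_height b" by simp
      then have "root_refl b' \<in> gen_group S" using less.IH b'P by blast
      moreover have "root_refl b = root_refl \<alpha> \<circ> root_refl b' \<circ> root_refl \<alpha>"
        using root_refl_root_refl_conj[OF a0, of b']
        by (simp add: b'_def root_refl_root_refl[OF a0])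
      ultimately show ?thesis using al(1) by (metis gen_group_comp root_refl_in_gen_group)
    qed
  qed
  assume "b \<in> Phi"
  then show ?thesis
    using pos uminus_pos_root[of b] root_refl_uminus[of b] by (cases "b \<in> P") metis+
qed

lemma W_subset_simple_group: "u \<in> W \<Longrightarrow> u \<in> gen_group S"
proof (induction rule: gen_group.induct)
  case gen_id
  then show ?case by (rule gen_group.gen_id)
next
  case (gen_step a u)
  then show ?case using gen_group_comp[OF root_refl_in_simple_group] by blast
qed

end

definition refl_word :: "'v::euclidean_space list \<Rightarrow> ('v \<Rightarrow> 'v)" where
  "refl_word l = foldr (\<lambda>a f. root_refl a \<circ> f) l id"

lemma refl_word_Nil [simp]: "refl_word [] = id"
  and refl_word_Cons [simp]: "refl_word (a # l) = root_refl a \<circ> refl_word l"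
  by (simp_all add: refl_word_def)

lemma refl_word_append: "refl_word (l1 @ l2) = refl_word l1 \<circ> refl_word l2"
  by (induction l1) (auto simp: comp_assoc)

lemma orthogonal_transformation_refl_word:
  "0 \<notin> set l \<Longrightarrow> orthogonal_transformation (refl_word l)"
  by (induction l)
     (auto simp: id_def
        intro!: orthogonal_transformation_compose orthogonal_transformation_root_refl)

context based_root_system begin

lemma simple_group_refl_word: "u \<in> gen_group S \<Longrightarrow> \<exists>l. set l \<subseteq> S \<and> u = refl_word l"
proof (induction rule: gen_group.induct)
  case gen_id then show ?case by (metis empty_subsetI list.set(1) refl_word_Nil)
next
  case (gen_step a u)
  then obtain l where "set l \<subseteq> S" "u = refl_word l" by blast
  then show ?case using gen_step by (metis insert_subset list.simps(15) refl_word_Cons)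
qed

lemma orthogonal_transformation_simple_word:
  "set l \<subseteq> S \<Longrightarrow> orthogonal_transformation (refl_word l)"
  using orthogonal_transformation_refl_word simple_nonzero by blast

lemma refl_word_deletion:
  assumes "set l \<subseteq> S" "\<beta> \<in> S" "refl_word l \<beta> \<notin> P"
  shows "\<exists>l'. set l' \<subseteq> S \<and> length l' + 1 = length l \<and> refl_word l = refl_word l' \<circ> root_refl \<beta>"
  using assms
proof (induction l)
  case Nil then show ?case using simple_pos by auto
next
  case (Cons \<alpha> l)
  have al: "\<alpha> \<in> S" and lS: "set l \<subseteq> S" using Cons.prems by auto
  show ?case
  proof (cases "refl_word l \<beta> \<in> P")
    case False
    then obtain l' where l': "set l' \<subseteq> S" "length l' + 1 = length l"
      "refl_word l = refl_word l' \<circ> root_refl \<beta>"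
      using Cons lS by blast
    show ?thesis
      by (rule exI[of _ "\<alpha> # l'"]) (use l' al in \<open>auto simp: comp_assoc\<close>)
  next
    case True
    have "root_refl \<alpha> (refl_word l \<beta>) \<notin> P" using Cons.prems by simp
    then have eq: "refl_word l \<beta> = \<alpha>" using root_refl_simple_pos[OF al True] by blast
    have "refl_word (\<alpha> # l) = refl_word l \<circ> root_refl \<beta>"
    proof
      fix v
      have "refl_word l (root_refl \<beta> v) = root_refl (refl_word l \<beta>) (refl_word l v)"
        using orthogonal_transformation_simple_word[OF lS]
        by (rule orthogonal_transformation_root_refl_conj)
      then show "refl_word (\<alpha> # l) v = (refl_word l \<circ> root_refl \<beta>) v" by (simp add: eq)
    qed
    then show ?thesis using lS by auto
  qed
qed

lemma refl_word_pos_id: "set l \<subseteq> S \<Longrightarrow> \<forall>a\<in>P. refl_word l a \<in> P \<Longrightarrow> refl_word l = id"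
proof (induction "length l" arbitrary: l rule: less_induct)
  case less
  show ?case
  proof (cases l rule: rev_exhaust)
    case Nil then show ?thesis by simp
  next
    case (snoc l0 \<beta>)
    have l0S: "set l0 \<subseteq> S" and b: "\<beta> \<in> S" using less.prems snoc by auto
    have bP: "\<beta> \<in> P" and b0: "\<beta> \<noteq> 0" using b simple_pos simple_nonzero by auto
    have wl: "refl_word l = refl_word l0 \<circ> root_refl \<beta>" using snoc by (simp add: refl_word_append)
    have lin: "linear (refl_word l0)"
      using orthogonal_transformation_simple_word[OF l0S] orthogonal_transformation_linear by blast
    have "refl_word l \<beta> = - refl_word l0 \<beta>"
      using wl root_refl_self[OF b0] linear_neg[OF lin] by simp
    then have "- refl_word l0 \<beta> \<in> P" using less.prems(2) bP by metis
    then have "refl_word l0 \<beta> \<notin> P" using uminus_not_pos by blast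
    then obtain l' where l': "set l' \<subseteq> S" "length l' + 1 = length l0"
      "refl_word l0 = refl_word l' \<circ> root_refl \<beta>"
      using refl_word_deletion[OF l0S b] by blast
    have "refl_word l = refl_word l'"
      using wl l'(3) root_refl_root_refl[OF b0] by (auto simp: fun_eq_iff)
    moreover have "length l' < length l" using l' snoc by simp
    ultimately show ?thesis using less.hyps l'(1) less.prems(2) by metis
  qed
qed

lemma W_pos_invariant_id: "y \<in> W \<Longrightarrow> \<forall>a\<in>P. y a \<in> P \<Longrightarrow> y = id"
  using simple_group_refl_word[OF W_subset_simple_group] refl_word_pos_id by blast

lemma card_root_refl_simple_less:
  assumes al: "\<alpha> \<in> S" and q: "Q \<alpha>"
  shows "card {a\<in>P. a \<noteq> \<alpha> \<and> Q (root_refl \<alpha> a)} < card {a\<in>P. Q a}"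
proof -
  have a0: "\<alpha> \<noteq> 0" using simple_nonzero al by auto
  have eq: "{a\<in>P. a \<noteq> \<alpha> \<and> Q (root_refl \<alpha> a)} = root_refl \<alpha> ` ({b\<in>P. Q b} - {\<alpha>})"
  proof (intro equalityI subsetI)
    fix a assume a: "a \<in> {a\<in>P. a \<noteq> \<alpha> \<and> Q (root_refl \<alpha> a)}"
    then have "root_refl \<alpha> a \<in> {b\<in>P. Q b} - {\<alpha>}"
      using root_refl_simple_pos[OF al] root_refl_simple_neq[OF al] by auto
    moreover have "a = root_refl \<alpha> (root_refl \<alpha> a)" using root_refl_root_refl[OF a0] by simp
    ultimately show "a \<in> root_refl \<alpha> ` ({b\<in>P. Q b} - {\<alpha>})" by blast
  next
    fix a assume "a \<in> root_refl \<alpha> ` ({b\<in>P. Q b} - {\<alpha>})"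
    then show "a \<in> {a\<in>P. a \<noteq> \<alpha> \<and> Q (root_refl \<alpha> a)}"
      using root_refl_simple_pos[OF al] root_refl_simple_neq[OF al] root_refl_root_refl[OF a0]
      by auto
  qed
  have "inj (root_refl \<alpha>)"
    using orthogonal_transformation_root_refl[OF a0] orthogonal_transformation_inj by blast
  then have "card {a\<in>P. a \<noteq> \<alpha> \<and> Q (root_refl \<alpha> a)} = card ({b\<in>P. Q b} - {\<alpha>})"
    unfolding eq by (simp add: card_image inj_on_subset)
  also have "\<dots> < card {b\<in>P. Q b}"
    using al q simple_pos finite_pos by (intro card_Diff1_less) auto
  finally show ?thesis .
qed

lemma W_pos_of_simple_pos:
  assumes y: "y \<in> W" and h: "\<forall>\<alpha>\<in>S. y \<alpha> \<in> P" and a: "a \<in> P"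
  shows "y a \<in> P"
proof -
  obtain c where c: "\<forall>s\<in>S. c s \<ge> 0" "a = (\<Sum>s\<in>S. c s *\<^sub>R s)"
    using pos_root_nonneg_comb[OF a] by blast
  have "y a = (\<Sum>s\<in>S. c s *\<^sub>R y s)"
    using linear_W[OF y] by (simp add: c(2) linear_sum linear_scale)
  then have "y a \<bullet> xi = (\<Sum>s\<in>S. c s * (y s \<bullet> xi))" by (simp add: inner_sum_left)
  also have "\<dots> \<le> 0"
    using c(1) h by (intro sum_nonpos mult_nonneg_nonpos) (auto simp: pos_iff less_imp_le)
  finally have "y a \<bullet> xi \<le> 0" .
  moreover have "y a \<in> Phi" using W_root[OF y] a pos_roots_subset by auto
  ultimately show ?thesis using regular by (auto simp: pos_iff order_le_less)
qed

lemma pos_root_inner_pos: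
  assumes r: "\<forall>a\<in>Phi. a \<bullet> p \<noteq> 0" and h: "\<forall>\<alpha>\<in>S. \<alpha> \<bullet> p \<ge> 0" and a: "a \<in> P"
  shows "a \<bullet> p > 0"
proof -
  obtain c where c: "\<forall>s\<in>S. c s \<ge> 0" "a = (\<Sum>s\<in>S. c s *\<^sub>R s)"
    using pos_root_nonneg_comb[OF a] by blast
  have "a \<bullet> p = (\<Sum>s\<in>S. c s * (s \<bullet> p))" by (subst c(2)) (simp add: inner_sum_left)
  also have "\<dots> \<ge> 0" using c(1) h by (intro sum_nonneg) auto
  finally show ?thesis using r a pos_roots_subset by (auto simp: order_le_less)
qed

lemma root_refl_notin_span:
  assumes "\<alpha> \<in> span J" "a \<notin> span J"
  shows "root_refl \<alpha> a \<notin> span J"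
proof
  assume "root_refl \<alpha> a \<in> span J"
  then have "root_refl \<alpha> a + (2 * (\<alpha> \<bullet> a) / (\<alpha> \<bullet> \<alpha>)) *\<^sub>R \<alpha> \<in> span J"
    using assms(1) by (intro span_add span_scale)
  then show False using assms(2) by (simp add: root_refl_def)
qed

text \<open>Induction on the number of positive roots made negative by y: if y is not the identity
  it makes some simple root alpha negative, alpha lies in J, and y \<circ> s_alpha makes one
  positive root fewer negative.\<close>

lemma parabolic_subgroup_criterion:
  assumes J: "J \<subseteq> S"
  shows "y \<in> W \<Longrightarrow> \<forall>a\<in>P - span J. y a \<in> P \<Longrightarrow> y \<in> gen_group J"
proof (induction "card {a\<in>P. y a \<notin> P}" arbitrary: y rule: less_induct)
  case less
  show ?case
  proof (cases "\<forall>a\<in>P. y a \<in> P")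
    case True
    then have "y = id" using W_pos_invariant_id less.prems by blast
    then show ?thesis by (simp add: gen_group.gen_id)
  next
    case False
    then obtain \<alpha> where al: "\<alpha> \<in> S" "y \<alpha> \<notin> P" using W_pos_of_simple_pos less.prems by blast
    have alPhi: "\<alpha> \<in> Phi" and a0: "\<alpha> \<noteq> 0" and alP: "\<alpha> \<in> P"
      using al simple_pos simple_root simple_nonzero by auto
    have "\<alpha> \<in> span J" using less.prems(2) al alP by blast
    then have alJ: "\<alpha> \<in> J" using simple_in_span[OF J al(1)] by blast
    define y' where "y' = y \<circ> root_refl \<alpha>"
    have y'W: "y' \<in> W"
      unfolding y'_def using less.prems(1) gen_group_comp root_refl_in_gen_group alPhi by blast
    have "y' \<alpha> \<in> P"
      using uminus_pos_root[OF W_root[OF less.prems(1) alPhi]] al(2)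
      by (simp add: y'_def root_refl_self[OF a0] linear_neg[OF linear_W[OF less.prems(1)]])
    then have "{a\<in>P. y' a \<notin> P} = {a\<in>P. a \<noteq> \<alpha> \<and> y (root_refl \<alpha> a) \<notin> P}"
      by (auto simp: y'_def)
    then have lt: "card {a\<in>P. y' a \<notin> P} < card {a\<in>P. y a \<notin> P}"
      using card_root_refl_simple_less[of \<alpha> "\<lambda>a. y a \<notin> P"] al by simp
    have "\<forall>a\<in>P - span J. y' a \<in> P"
      using less.prems(2) root_refl_simple_pos[OF al(1)] root_refl_notin_span[OF \<open>\<alpha> \<in> span J\<close>]
        span_base[of \<alpha> J] alJ
      by (metis DiffD1 DiffD2 DiffI comp_apply y'_def)
    then have "y' \<in> gen_group J" using less.hyps[OF lt y'W] by blast
    moreover have "y = y' \<circ> root_refl \<alpha>"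
      using root_refl_root_refl[OF a0] by (auto simp: y'_def fun_eq_iff)
    ultimately show ?thesis using gen_group_comp root_refl_in_gen_group alJ by metis
  qed
qed

lemma chamber_exists:
  "\<forall>a\<in>Phi. a \<bullet> p \<noteq> 0 \<Longrightarrow> \<exists>v\<in>W. \<exists>q\<in>C. p = v q"
proof (induction "card {a\<in>P. a \<bullet> p < 0}" arbitrary: p rule: less_induct)
  case less
  show ?case
  proof (cases "\<forall>\<alpha>\<in>S. \<alpha> \<bullet> p \<ge> 0")
    case True
    then have "p \<in> C" using pos_root_inner_pos less.prems by (auto simp: dominant_chamber_iff)
    then show ?thesis using gen_group.gen_id[of Phi] by (metis id_apply)
  next
    case False
    then obtain \<alpha> where al: "\<alpha> \<in> S" "\<alpha> \<bullet> p < 0" by (auto simp: not_le)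
    have alPhi: "\<alpha> \<in> Phi" and a0: "\<alpha> \<noteq> 0" using al simple_root simple_nonzero by auto
    define p' where "p' = root_refl \<alpha> p"
    have adj: "a \<bullet> p' = root_refl \<alpha> a \<bullet> p" for a by (simp add: p'_def root_refl_adjoint[OF a0])
    have r': "\<forall>a\<in>Phi. a \<bullet> p' \<noteq> 0" using adj less.prems root_refl_closed alPhi by simp
    have "{a\<in>P. a \<bullet> p' < 0} = {a\<in>P. a \<noteq> \<alpha> \<and> root_refl \<alpha> a \<bullet> p < 0}"
      using al(2) by (auto simp: adj root_refl_self[OF a0])
    then have lt: "card {a\<in>P. a \<bullet> p' < 0} < card {a\<in>P. a \<bullet> p < 0}"
      using card_root_refl_simple_less[of \<alpha> "\<lambda>a. a \<bullet> p < 0"] al by simp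
    obtain v q where vq: "v \<in> W" "q \<in> C" "p' = v q" using less.hyps[OF lt r'] by blast
    have "p = (root_refl \<alpha> \<circ> v) q"
      using vq(3) root_refl_root_refl[OF a0] by (metis comp_apply p'_def)
    moreover have "root_refl \<alpha> \<circ> v \<in> W" using vq alPhi by (simp add: gen_group.gen_step)
    ultimately show ?thesis using vq by blast
  qed
qed

lemma pos_of_inner_dominant_pos: "a \<in> Phi \<Longrightarrow> q \<in> C \<Longrightarrow> a \<bullet> q > 0 \<Longrightarrow> a \<in> P"
  using uminus_pos_root[of a] by (force simp: dominant_chamber_iff)

lemma chamber_unique:
  assumes v1: "v1 \<in> W" and v2: "v2 \<in> W" and q1: "q1 \<in> C" and q2: "q2 \<in> C" and e: "v1 q1 = v2 q2"
  shows "v1 = v2"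
proof -
  have bv2: "bij v2" using bij_gen_group v2 zero_notin_roots by blast
  define y where "y = inv v2 \<circ> v1"
  have yW: "y \<in> W"
    unfolding y_def by (intro gen_group_comp inv_in_gen_group v1 v2 zero_notin_roots)
  have yq: "y q1 = q2" using e bv2 by (simp add: y_def bij_is_inj)
  have orth: "orthogonal_transformation y"
    using orthogonal_transformation_gen_group_roots[OF yW] by simp
  have "\<forall>a\<in>P. y a \<in> P"
  proof
    fix a assume a: "a \<in> P"
    have "y a \<bullet> q2 = a \<bullet> q1" using orth yq by (metis orthogonal_transformation_def)
    also have "\<dots> > 0" using q1 a by (simp add: dominant_chamber_iff)
    finally show "y a \<in> P"
      using pos_of_inner_dominant_pos W_root[OF yW] a pos_roots_subset q2 by blast
  qed
  then have "y = id" using W_pos_invariant_id yW by blast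
  then show ?thesis using bv2 by (metis bij_inv_eq_iff comp_apply id_apply y_def ext)
qed

end

section \<open>Alcoves and Weyl chambers\<close>

lemma kval_eqI:
  assumes "B \<noteq> {}" "\<forall>v\<in>B. of_int k - 1 < a \<bullet> v \<and> a \<bullet> v < of_int k"
  shows "kval a B = k"
  unfolding kval_def
proof (rule the_equality)
  show "\<forall>v\<in>B. of_int k - 1 < a \<bullet> v \<and> a \<bullet> v < of_int k" by fact
next
  fix k' :: int assume h: "\<forall>v\<in>B. of_int k' - 1 < a \<bullet> v \<and> a \<bullet> v < of_int k'"
  obtain v where "v \<in> B" using assms(1) by blast
  then have "of_int k' - 1 < (of_int k :: real)" "of_int k - 1 < (of_int k' :: real)"
    using h assms(2) by fastforce+
  then show "k' = k" by linarith
qed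

locale alcove_setting = based_root_system +
  fixes X
  assumes translation_lattice: "translation_lattice Phi X"
begin

abbreviation "A0 \<equiv> base_alcove Phi xi"

lemma base_alcove_iff: "v \<in> A0 \<longleftrightarrow> (\<forall>a\<in>P. -1 < a \<bullet> v \<and> a \<bullet> v < 0)"
  by (simp add: base_alcove_def)

lemma base_alcove_nonempty: "A0 \<noteq> {}"
proof -
  define c where "c = 1 + (\<Sum>a\<in>Phi. \<bar>a \<bullet> xi\<bar>)"
  have cpos: "c > 0" unfolding c_def by (smt (verit) sum_nonneg abs_ge_zero)
  have "(1 / c) *\<^sub>R xi \<in> A0"
  proof (unfold base_alcove_iff, intro ballI conjI)
    fix a assume a: "a \<in> P"
    then have aPhi: "a \<in> Phi" using pos_roots_subset by auto
    have neg: "a \<bullet> xi < 0" using a by (simp add: pos_iff)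
    have "\<bar>a \<bullet> xi\<bar> \<le> (\<Sum>a\<in>Phi. \<bar>a \<bullet> xi\<bar>)"
      using member_le_sum[of a Phi "\<lambda>a. \<bar>a \<bullet> xi\<bar>"] aPhi finite_roots by auto
    then have "- c < a \<bullet> xi" unfolding c_def using neg by linarith
    then show "-1 < a \<bullet> ((1 / c) *\<^sub>R xi)" using cpos by (simp add: field_simps)
    show "a \<bullet> ((1 / c) *\<^sub>R xi) < 0" using cpos neg by (simp add: divide_neg_pos)
  qed
  then show ?thesis by blast
qed

lemma kval_base_alcove: "a \<in> Phi \<Longrightarrow> kval a A0 = (if a \<in> P then 0 else 1)"
proof (rule kval_eqI[OF base_alcove_nonempty], intro ballI)
  fix v assume a: "a \<in> Phi" and v: "v \<in> A0"
  show "of_int (if a \<in> P then 0 else 1) - 1 < a \<bullet> v \<and> a \<bullet> v < of_int (if a \<in> P then 0 else 1)"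
  proof (cases "a \<in> P")
    case True
    then show ?thesis using v by (simp add: base_alcove_iff)
  next
    case False
    then have "-1 < (- a) \<bullet> v \<and> (- a) \<bullet> v < 0"
      using uminus_pos_root[OF a] v unfolding base_alcove_iff by blast
    then show ?thesis using False by simp
  qed
qed

lemma alcove_between_walls:
  assumes x: "x \<in> IW Phi X" and b: "b \<in> Phi"
  shows "\<exists>m::int. \<forall>p\<in>iw_act x ` A0. of_int m - 1 < b \<bullet> p \<and> b \<bullet> p < of_int m"
proof -
  obtain l u where lu: "x = (l, u)" "l \<in> X" "u \<in> W" using x by (auto simp: IW_def)
  obtain n :: int where n: "b \<bullet> l = of_int n"
    using translation_lattice lu(2) b unfolding translation_lattice_def by (metis Ints_cases)
  have "orthogonal_transformation u" "bij u"
    using lu(3) orthogonal_transformation_gen_group_roots bij_gen_group zero_notin_roots by blast+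
  then have adj: "b \<bullet> u v = inv u b \<bullet> v" for v
    by (metis bij_inv_eq_iff orthogonal_transformation_def)
  have c: "inv u b \<in> Phi" using W_root inv_in_gen_group lu(3) b zero_notin_roots by blast
  show ?thesis
  proof (cases "inv u b \<in> P")
    case True
    show ?thesis
      by (rule exI[of _ n])
         (use True n lu in \<open>auto simp: iw_act_def inner_add_right adj base_alcove_iff\<close>)
  next
    case False
    then have nc: "- inv u b \<in> P" using uminus_pos_root c by blast
    show ?thesis
    proof (rule exI[of _ "n + 1"], intro ballI)
      fix p assume "p \<in> iw_act x ` A0"
      then obtain v where v: "v \<in> A0" "p = l + u v" by (auto simp: lu iw_act_def)
      have "-1 < (- inv u b) \<bullet> v \<and> (- inv u b) \<bullet> v < 0"
        using nc v(1) by (auto simp: base_alcove_iff)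
      then show "of_int (n + 1) - 1 < b \<bullet> p \<and> b \<bullet> p < of_int (n + 1)"
        using n v(2) by (simp add: inner_add_right adj)
    qed
  qed
qed

lemma kval_alcove:
  assumes "x \<in> IW Phi X" "b \<in> Phi" "p \<in> iw_act x ` A0"
  shows "of_int (kval b (iw_act x ` A0)) - 1 < b \<bullet> p" and "b \<bullet> p < of_int (kval b (iw_act x ` A0))"
proof -
  obtain m :: int where m: "\<forall>p\<in>iw_act x ` A0. of_int m - 1 < b \<bullet> p \<and> b \<bullet> p < of_int m"
    using alcove_between_walls assms(1,2) by blast
  moreover have "iw_act x ` A0 \<noteq> {}" using base_alcove_nonempty by simp
  ultimately have "kval b (iw_act x ` A0) = m" by (rule kval_eqI[rotated])
  then show "of_int (kval b (iw_act x ` A0)) - 1 < b \<bullet> p" "b \<bullet> p < of_int (kval b (iw_act x ` A0))"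
    using m assms(3) by auto
qed

lemma alcove_pos_iff_kval:
  assumes "x \<in> IW Phi X" "b \<in> Phi" "p \<in> iw_act x ` A0"
  shows "0 < b \<bullet> p \<longleftrightarrow> 1 \<le> kval b (iw_act x ` A0)"
  using kval_alcove[OF assms] by linarith

lemma alcove_off_walls:
  assumes "x \<in> IW Phi X" "b \<in> Phi" "p \<in> iw_act x ` A0"
  shows "b \<bullet> p \<noteq> 0"
proof
  assume "b \<bullet> p = 0"
  then have "0 < kval b (iw_act x ` A0)" "kval b (iw_act x ` A0) < 1"
    using kval_alcove[OF assms] by simp_all
  then show False by simp
qed

lemma eta2_alcove:
  assumes x: "x \<in> IW Phi X"
  shows "eta2 Phi xi x \<in> W" and "inv (eta2 Phi xi x) ` iw_act x ` A0 \<subseteq> C"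
proof -
  obtain p0 where p0: "p0 \<in> iw_act x ` A0" using base_alcove_nonempty by blast
  obtain v q0 where vq: "v \<in> W" "q0 \<in> C" "p0 = v q0"
    using chamber_exists[of p0] alcove_off_walls[OF x _ p0] by blast
  have ov: "orthogonal_transformation v" "bij v"
    using vq(1) orthogonal_transformation_gen_group_roots bij_gen_group zero_notin_roots by blast+
  have v_dominant: "inv v ` iw_act x ` A0 \<subseteq> C"
  proof
    fix q assume "q \<in> inv v ` iw_act x ` A0"
    then obtain p where p: "p \<in> iw_act x ` A0" "q = inv v p" by blast
    show "q \<in> C" unfolding dominant_chamber_iff
    proof
      fix a assume a: "a \<in> P"
      have vaPhi: "v a \<in> Phi" using W_root vq(1) a pos_roots_subset by blast
      have "v a \<bullet> p0 = a \<bullet> q0" using vq(3) ov by (simp add: orthogonal_transformation_def)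
      also have "\<dots> > 0" using vq(2) a by (simp add: dominant_chamber_iff)
      finally have "v a \<bullet> p > 0"
        using alcove_pos_iff_kval[OF x vaPhi p0] alcove_pos_iff_kval[OF x vaPhi p(1)] by simp
      then show "a \<bullet> q > 0"
        using p(2) ov by (metis bij_inv_eq_iff orthogonal_transformation_def)
    qed
  qed
  have "eta2 Phi xi x = v"
    unfolding eta2_def
  proof (rule the_equality)
    show "v \<in> W \<and> inv v ` iw_act x ` A0 \<subseteq> C" using vq(1) v_dominant by simp
  next
    fix v' assume h: "v' \<in> W \<and> inv v' ` iw_act x ` A0 \<subseteq> C"
    then have "bij v'" using bij_gen_group zero_notin_roots by blast
    then have "v' (inv v' p0) = p0" by (meson bij_inv_eq_iff)
    moreover have "inv v' p0 \<in> C" using h p0 by blast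
    ultimately show "v' = v" using chamber_unique[of v' v "inv v' p0" q0] h vq by metis
  qed
  then show "eta2 Phi xi x \<in> W" "inv (eta2 Phi xi x) ` iw_act x ` A0 \<subseteq> C"
    using vq(1) v_dominant by simp_all
qed

section \<open>(J, w, delta)-alcoves\<close>

lemma JW_alcove_pos:
  assumes x: "x \<in> IW Phi X"
    and shrunken: "\<forall>a\<in>Phi. kval a (iw_act x ` A0) \<noteq> kval a A0"
    and JW: "JW_alcove Phi xi X sig J w x" and w: "w \<in> W"
    and b: "b \<in> P - span J"
  shows "inv (eta2 Phi xi x) (w b) \<in> P"
proof -
  let ?v = "eta2 Phi xi x" and ?A = "iw_act x ` A0"
  have a: "w b \<in> Phi" using W_root w b pos_roots_subset by blast
  have "w b \<in> w ` (P - (sub_roots Phi J \<inter> P))" using b by (auto simp: sub_roots_def)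
  then have "kval (w b) A0 \<le> kval (w b) ?A" using JW by (auto simp: JW_alcove_def)
  moreover have "kval (w b) ?A \<noteq> kval (w b) A0" using shrunken a by blast
  moreover have "0 \<le> kval (w b) A0" using kval_base_alcove[OF a] by simp
  ultimately have k: "1 \<le> kval (w b) ?A" by linarith
  obtain p where p: "p \<in> ?A" using base_alcove_nonempty by blast
  have "0 < w b \<bullet> p" using alcove_pos_iff_kval[OF x a p] k by blast
  moreover have "orthogonal_transformation (inv ?v)"
    using eta2_alcove(1)[OF x] orthogonal_transformation_gen_group_roots
      orthogonal_transformation_inv
    by blast
  ultimately have "0 < inv ?v (w b) \<bullet> inv ?v p"
    by (simp add: orthogonal_transformation_def)
  moreover have "inv ?v p \<in> C" using eta2_alcove(2)[OF x] p by blast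
  moreover have "inv ?v (w b) \<in> Phi"
    using W_root inv_in_gen_group eta2_alcove(1)[OF x] a zero_notin_roots by blast
  ultimately show ?thesis using pos_of_inner_dominant_pos by blast
qed

end

lemma JW_alcove_finite_part:
  "JW_alcove Phi xi X sig J w x \<Longrightarrow> inv w \<circ> eta1 x \<circ> delta_W sig w \<in> gen_group J"
  by (auto simp: JW_alcove_def IW_J_def iw_mult_def delta_IW_def eta1_def case_prod_beta)

lemma delta_W_inv_factorization:
  assumes "bij sig" "bij w" "bij v"
  shows "delta_W_inv sig (inv v \<circ> u) \<circ> v =
    delta_W_inv sig (inv v \<circ> w) \<circ> delta_W_inv sig (inv w \<circ> u \<circ> delta_W sig w) \<circ> inv (inv v \<circ> w)"
proof -
  have sig: "sig (inv sig z) = z" "inv sig (sig z) = z" for z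
    using assms(1) by (simp_all add: bij_is_inj bij_is_surj surj_f_inv_f)
  have ww: "w (inv w z) = z" for z using assms(2) by (simp add: bij_is_surj surj_f_inv_f)
  have "inv (inv v \<circ> w) = inv w \<circ> v"
    using assms(2,3) by (simp add: o_inv_distrib bij_imp_bij_inv inv_inv_eq)
  then show ?thesis by (simp add: fun_eq_iff delta_W_inv_def delta_W_def sig ww)
qed

theorem proposition4p1p1:
  fixes Phi :: "'v::euclidean_space set" and X :: "'v set" and xi :: 'v
    and sig :: "'v \<Rightarrow> 'v" and x :: "'v iw" and J :: "'v set" and w :: "'v \<Rightarrow> 'v"
  assumes "reduced_root_system Phi"
    and "\<forall>a\<in>Phi. a \<bullet> xi \<noteq> 0"
    and "translation_lattice Phi X"
    and "orthogonal_transformation sig" and "sig ` Phi = Phi" and "sig ` X = X"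
    and "sig ` base_alcove Phi xi = base_alcove Phi xi"
    and "x \<in> IW Phi X"
    and "\<forall>a\<in>Phi. kval a (iw_act x ` base_alcove Phi xi) \<noteq> kval a (base_alcove Phi xi)"
    and "J \<subseteq> simple_roots Phi xi" and "sig ` J = J"
    and "w \<in> gen_group Phi"
    and "JW_alcove Phi xi X sig J w x"
  shows "eta_delta Phi xi sig x \<in> gen_group J"
proof -
  interpret alcove_setting Phi xi X using assms(1-3) by unfold_locales
  define v where "v = eta2 Phi xi x"
  define y where "y = inv v \<circ> w"
  define j where "j = inv w \<circ> eta1 x \<circ> delta_W sig w"
  have J0: "0 \<notin> J" using assms(10) simple_pos pos_roots_subset zero_notin_roots by blast
  have "y \<in> W"
    unfolding y_def v_def
    by (intro gen_group_comp inv_in_gen_group eta2_alcove(1)[OF assms(8)] assms(12)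
        zero_notin_roots)
  then have "y \<in> gen_group J"
    using parabolic_subgroup_criterion[OF assms(10)] JW_alcove_pos[OF assms(8,9,13,12)]
    by (simp add: y_def v_def)
  moreover have "j \<in> gen_group J" using JW_alcove_finite_part[OF assms(13)] by (simp add: j_def)
  moreover have "eta_delta Phi xi sig x = delta_W_inv sig y \<circ> delta_W_inv sig j \<circ> inv y"
    unfolding eta_delta_def y_def j_def v_def
    using orthogonal_transformation_bij[OF assms(4)] bij_gen_group[OF assms(12) zero_notin_roots]
      bij_gen_group[OF eta2_alcove(1)[OF assms(8)] zero_notin_roots]
    by (rule delta_W_inv_factorization)
  ultimately show ?thesis
    using gen_group_comp gen_group_delta_W_inv[OF _ assms(4,11)] inv_in_gen_group J0 by metis
qed

end
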